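(* Let $u\in\mathbb C$ and $a\in\mathbb C\setminus\{0\}$, and let $s$ range over a domain on which $(t+u)^2+s\neq0$ for all $t\in[-1,1]$, with a branch $R(t,s)=\sqrt{(t+u)^2+s}$ continuous in $t$ and holomorphic in $s$; fix $\sqrt a$ and put $\sqrt{2a}=\sqrt2\sqrt a$. For integers $\nu\ge0$ define $$I_\nu(s)=\frac{1}{\sqrt{2a}}\int_{-1}^1\frac{(t+u)^\nu\,dt}{\sqrt{t+1}\,R(t,s)} .$$ Then, writing $R_1=R(1,s)=\sqrt{(u+1)^2+s}$, $$\frac{\partial I_{\nu+2}}{\partial s}=-\frac12I_\nu-s\frac{\partial I_\nu}{\partial s},$$ $$\frac{\partial}{\partial s}(I_2+I_1)=u\frac{\partial I_1}{\partial s}-\frac14I_0+\frac{1}{2\sqrt a\,R_1},$$ $$\frac{\partial}{\partial s}(I_3-I_1)=(u^2-2u)\frac{\partial I_1}{\partial s}-\frac34I_1+\frac{u-1}{4}I_0+\frac{u}{\sqrt a\,R_1}.$$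
   Context: $\sqrt{t+1}$ denotes the nonnegative real square root for $t\in[-1,1]$. The paper considers $s\ge0$ with $u,a$ fixed parameters arising from $v,w$ via $u=v(v+2z)/(v^2-4w)$, $a=v^2-4w$. *)

theory Defs
  imports "HOL-Analysis.Analysis"
begin

definition Inu :: "complex \<Rightarrow> complex \<Rightarrow> (real \<Rightarrow> complex \<Rightarrow> complex) \<Rightarrow> nat \<Rightarrow> complex \<Rightarrow> complex" where
  "Inu u sa R \<nu> s = 1 / (complex_of_real (sqrt 2) * sa) *
     integral {-1..1} (\<lambda>t::real. (complex_of_real t + u) ^ \<nu> /
        (complex_of_real (sqrt (t + 1)) * R t s))"

end

theory Submission
  imports Defs
begin

text \<open>Substituting \<open>t = w\<^sup>2 - 1\<close> removes the singular weight: \<open>I\<^sub>\<nu> = 2 K\<^sub>\<nu> / sqrt (2a)\<close>, where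
  \<open>K\<^sub>\<nu>(s)\<close> is the integral of \<open>(t + u)\<^sup>\<nu> / R(t, s)\<close> over \<open>w \<in> [0, sqrt 2]\<close>, with an integrand
  continuous in \<open>w\<close> and holomorphic in \<open>s\<close>. Differentiating under the integral sign gives
  \<open>I\<^sub>\<nu>' = - E\<^sub>\<nu> / sqrt (2a)\<close>, where \<open>E\<^sub>\<nu>\<close> integrates \<open>(t + u)\<^sup>\<nu> / R\<^sup>3\<close> instead.
  As \<open>R\<^sup>2 = (t + u)\<^sup>2 + s\<close>, \<open>E\<^sub>\<nu>\<^sub>+\<^sub>2 = K\<^sub>\<nu> - s E\<^sub>\<nu>\<close>, which is the first identity. The other two
  come from integrating the \<open>w\<close>-derivative of \<open>w (t + u)\<^sup>k / R\<close> for \<open>k = 0, 1\<close>; its value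
  at \<open>w = sqrt 2\<close> produces the terms with \<open>R\<^sub>1\<close>.\<close>

lemma has_vector_derivative_iff_tendsto_quotient:
  fixes f :: "real \<Rightarrow> 'a::real_normed_field"
  shows "(f has_vector_derivative v) (at x within S) \<longleftrightarrow>
         ((\<lambda>y. (f y - f x) / of_real (y - x)) \<longlongrightarrow> v) (at x within S)"
proof -
  have "\<forall>\<^sub>F y in at x within S. norm (f y - f x - (y - x) *\<^sub>R v) / norm (y - x)
          = norm ((f y - f x) / of_real (y - x) - v)"
    unfolding eventually_at_filter
  proof (intro always_eventually allI impI)
    fix y assume "y \<noteq> x"
    then have "(f y - f x) / of_real (y - x) - v = (f y - f x - (y - x) *\<^sub>R v) / of_real (y - x)"
      by (simp add: field_simps scaleR_conv_of_real)
    then show "norm (f y - f x - (y - x) *\<^sub>R v) / norm (y - x)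
          = norm ((f y - f x) / of_real (y - x) - v)"
      by (simp add: norm_divide del: of_real_diff)
  qed
  then have "(f has_vector_derivative v) (at x within S) \<longleftrightarrow>
      ((\<lambda>y. norm ((f y - f x) / of_real (y - x) - v)) \<longlongrightarrow> 0) (at x within S)"
    unfolding has_vector_derivative_def has_derivative_iff_norm
    by (simp add: bounded_linear_scaleR_left tendsto_cong)
  then show ?thesis
    by (simp add: tendsto_norm_zero_iff LIM_zero_iff)
qed

lemma tendsto_sqrt_quotient:
  fixes r f d :: "'a \<Rightarrow> 'b::real_normed_field"
  assumes r: "(r \<longlongrightarrow> r0) F" and sq: "\<forall>\<^sub>F y in F. r y ^ 2 = f y"
    and "r0 ^ 2 = f0" and "r0 \<noteq> 0"
    and f: "((\<lambda>y. (f y - f0) / d y) \<longlongrightarrow> f') F"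
  shows "((\<lambda>y. (r y - r0) / d y) \<longlongrightarrow> f' / (2 * r0)) F"
proof -
  have sum: "((\<lambda>y. r y + r0) \<longlongrightarrow> 2 * r0) F"
    using r by (auto intro!: tendsto_eq_intros)
  then have "\<forall>\<^sub>F y in F. r y + r0 \<noteq> 0"
    using tendsto_imp_eventually_ne \<open>r0 \<noteq> 0\<close> by fastforce
  with sq have "\<forall>\<^sub>F y in F. (f y - f0) / d y / (r y + r0) = (r y - r0) / d y"
  proof eventually_elim
    case (elim y)
    have "f y - f0 = (r y - r0) * (r y + r0)"
      using elim \<open>r0 ^ 2 = f0\<close> by (simp add: power2_eq_square algebra_simps)
    with elim show ?case by simp
  qed
  moreover have "((\<lambda>y. (f y - f0) / d y / (r y + r0)) \<longlongrightarrow> f' / (2 * r0)) F"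
    using f sum \<open>r0 \<noteq> 0\<close> by (intro tendsto_divide) simp_all
  ultimately show ?thesis
    by (rule Lim_transform_eventually[rotated])
qed

lemma has_field_derivative_sqrt:
  fixes r f :: "'a::real_normed_field \<Rightarrow> 'a"
  assumes "continuous (at x within S) r" and "\<forall>\<^sub>F y in at x within S. r y ^ 2 = f y"
    and "r x ^ 2 = f x" and "r x \<noteq> 0" and "(f has_field_derivative f') (at x within S)"
  shows "(r has_field_derivative f' / (2 * r x)) (at x within S)"
  using assms unfolding has_field_derivative_iff continuous_within
  by (rule tendsto_sqrt_quotient)

lemma has_vector_derivative_sqrt:
  fixes r f :: "real \<Rightarrow> 'a::real_normed_field"
  assumes "continuous (at x within S) r" and "\<forall>\<^sub>F y in at x within S. r y ^ 2 = f y"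
    and "r x ^ 2 = f x" and "r x \<noteq> 0" and "(f has_vector_derivative f') (at x within S)"
  shows "(r has_vector_derivative f' / (2 * r x)) (at x within S)"
  using assms unfolding has_vector_derivative_iff_tendsto_quotient continuous_within
  by (rule tendsto_sqrt_quotient)

lemma continuous_square_roots_eq:
  fixes f g :: "'a::topological_space \<Rightarrow> 'b::real_normed_field"
  assumes "connected D" and "continuous_on D f" and "continuous_on D g"
    and "\<And>z. z \<in> D \<Longrightarrow> f z ^ 2 = g z ^ 2" and "\<And>z. z \<in> D \<Longrightarrow> g z \<noteq> 0"
    and "x \<in> D" and "f x = g x" and "z \<in> D"
  shows "f z = g z"
proof -
  let ?h = "\<lambda>z. f z / g z"
  have "?h y ^ 2 = 1" if "y \<in> D" for y
    using assms(4,5) that by (simp add: power_divide)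
  then have "?h ` D \<subseteq> {1, -1}"
    unfolding power2_eq_1_iff by blast
  then have "finite (?h ` D)"
    by (rule finite_subset) simp
  with assms(1) have "?h constant_on D"
    using assms(2,3,5) by (intro continuous_finite_range_constant continuous_on_divide) auto
  then have "?h z = ?h x"
    using assms(6,8) unfolding constant_on_def by fastforce
  with assms(5-8) show ?thesis by simp
qed

lemma one_plus_divide_notin_nonpos_Reals:
  fixes d Q :: complex
  assumes "norm d < norm Q"
  shows "1 + d / Q \<notin> \<real>\<^sub>\<le>\<^sub>0"
proof -
  have "norm (d / Q) < 1"
    using assms by (simp add: norm_divide divide_less_eq)
  then have "0 < Re (1 + d / Q)"
    using abs_Re_le_cmod[of "d / Q"] by simp
  then show ?thesis
    by (simp add: complex_nonpos_Reals_iff)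
qed

lemma csqrt_branch_on_ball:
  fixes \<rho> :: "complex \<Rightarrow> complex"
  assumes "continuous_on (ball s r) \<rho>" and "\<And>z. z \<in> ball s r \<Longrightarrow> \<rho> z ^ 2 = Q + (z - s)"
    and "r \<le> norm Q" and "z \<in> ball s r"
  shows "\<rho> z = \<rho> s * csqrt (1 + (z - s) / Q)"
proof (rule continuous_square_roots_eq[where D = "ball s r" and x = s and f = \<rho>
    and g = "\<lambda>z. \<rho> s * csqrt (1 + (z - s) / Q)"])
  have "0 < r"
    using assms(4) by (meson le_less_trans mem_ball zero_le_dist)
  then have "Q \<noteq> 0" and s: "s \<in> ball s r"
    using assms(3) by auto
  have notneg: "1 + (y - s) / Q \<notin> \<real>\<^sub>\<le>\<^sub>0" if "y \<in> ball s r" for y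
    using that assms(3) by (intro one_plus_divide_notin_nonpos_Reals) (simp add: dist_norm norm_minus_commute)
  then show "continuous_on (ball s r) (\<lambda>z. \<rho> s * csqrt (1 + (z - s) / Q))"
    using \<open>Q \<noteq> 0\<close>
    by (intro continuous_intros continuous_on_compose2[OF continuous_on_csqrt]) auto
  show "s \<in> ball s r" by (fact s)
  fix y assume y: "y \<in> ball s r"
  have "\<rho> s ^ 2 = Q"
    using assms(2)[OF s] by simp
  then have "(\<rho> s * csqrt (1 + (y - s) / Q)) ^ 2 = Q + (y - s)"
    using \<open>Q \<noteq> 0\<close> by (simp add: power_mult_distrib distrib_left)
  then show "\<rho> y ^ 2 = (\<rho> s * csqrt (1 + (y - s) / Q)) ^ 2"
    using assms(2)[OF y] by simp
  have "csqrt (1 + (y - s) / Q) \<noteq> 0"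
    using notneg[OF y] by auto
  moreover have "\<rho> s \<noteq> 0"
    using \<open>\<rho> s ^ 2 = Q\<close> \<open>Q \<noteq> 0\<close> by auto
  ultimately show "\<rho> s * csqrt (1 + (y - s) / Q) \<noteq> 0" by simp
qed (use assms in auto)

lemma has_integral_sqrt_substitution:
  fixes \<phi> :: "real \<Rightarrow> complex"
  assumes "-1 \<le> b" and "continuous_on {0..sqrt (b + 1)} \<phi>"
  shows "((\<lambda>t. \<phi> (sqrt (t + 1)) / of_real (sqrt (t + 1))) has_integral
           2 * integral {0..sqrt (b + 1)} \<phi>) {-1..b}"
proof -
  have "((\<lambda>t. (inverse (sqrt (t + 1)) / 2) *\<^sub>R \<phi> (sqrt (t + 1))) has_integral
      integral {sqrt (-1 + 1)..sqrt (b + 1)} \<phi> - integral {sqrt (b + 1)..sqrt (-1 + 1)} \<phi>) {-1..b}"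
    using assms
    by (intro has_integral_substitution_general[where s = "{-1}" and c = 0 and d = "sqrt (b + 1)"])
       (auto intro!: continuous_intros derivative_eq_intros)
  moreover have "integral {sqrt (b + 1)..sqrt (-1 + 1)} \<phi> = 0"
    using assms(1) by (cases "b = -1") auto
  ultimately have "((\<lambda>t. \<phi> (sqrt (t + 1)) / of_real (sqrt (t + 1)) / 2) has_integral
      integral {0..sqrt (b + 1)} \<phi>) {-1..b}"
    by (simp add: scaleR_conv_of_real field_simps add.commute)
  from has_integral_mult_right[OF this, of 2] show ?thesis
    by simp
qed

locale sqrt_quadratic_family =
  fixes u :: complex and S :: "complex set" and R :: "real \<Rightarrow> complex \<Rightarrow> complex"
  assumes open_S: "open S"
    and radicand_nonzero: "\<And>t z. t \<in> {-1..1} \<Longrightarrow> z \<in> S \<Longrightarrow> (of_real t + u) ^ 2 + z \<noteq> 0"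
    and R_square: "\<And>t z. t \<in> {-1..1} \<Longrightarrow> z \<in> S \<Longrightarrow> R t z ^ 2 = (of_real t + u) ^ 2 + z"
    and R_continuous: "\<And>z. z \<in> S \<Longrightarrow> continuous_on {-1..1} (\<lambda>t. R t z)"
    and R_holomorphic: "\<And>t. t \<in> {-1..1} \<Longrightarrow> (\<lambda>z. R t z) holomorphic_on S"
begin

text \<open>In the variable \<open>w = sqrt (t + 1)\<close>: \<open>g w = t + u\<close> and \<open>\<rho> w z = R(t, z)\<close>.\<close>

definition g :: "real \<Rightarrow> complex" where
  "g w = of_real (w\<^sup>2 - 1) + u"

definition \<rho> :: "real \<Rightarrow> complex \<Rightarrow> complex" where
  "\<rho> w z = R (w\<^sup>2 - 1) z"

definition K :: "nat \<Rightarrow> complex \<Rightarrow> complex" where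
  "K \<nu> z = integral {0..sqrt 2} (\<lambda>w. g w ^ \<nu> / \<rho> w z)"

definition E :: "nat \<Rightarrow> complex \<Rightarrow> complex" where
  "E \<nu> z = integral {0..sqrt 2} (\<lambda>w. g w ^ \<nu> / \<rho> w z ^ 3)"

lemma substituted_in_range: "w \<in> {0..sqrt 2} \<Longrightarrow> w\<^sup>2 - 1 \<in> {-1..1}"
  using power_mono[of w "sqrt 2" 2] by auto

lemma rho_square: "w \<in> {0..sqrt 2} \<Longrightarrow> z \<in> S \<Longrightarrow> \<rho> w z ^ 2 = g w ^ 2 + z"
  unfolding \<rho>_def g_def by (rule R_square[OF substituted_in_range])

lemma g_square_plus_nonzero: "w \<in> {0..sqrt 2} \<Longrightarrow> z \<in> S \<Longrightarrow> g w ^ 2 + z \<noteq> 0"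
  unfolding g_def by (rule radicand_nonzero[OF substituted_in_range])

lemma rho_nonzero: "w \<in> {0..sqrt 2} \<Longrightarrow> z \<in> S \<Longrightarrow> \<rho> w z \<noteq> 0"
  using rho_square g_square_plus_nonzero by fastforce

lemma continuous_on_g [continuous_intros]: "continuous_on A f \<Longrightarrow> continuous_on A (\<lambda>x. g (f x))"
  unfolding g_def by (intro continuous_intros)

lemma continuous_on_rho: "z \<in> S \<Longrightarrow> continuous_on {0..sqrt 2} (\<lambda>w. \<rho> w z)"
  unfolding \<rho>_def
  by (rule continuous_on_compose2[OF R_continuous]) (auto intro!: continuous_intros substituted_in_range)

lemma continuous_on_integrand:
  "z \<in> S \<Longrightarrow> continuous_on {0..sqrt 2} (\<lambda>w. g w ^ n / \<rho> w z ^ k)"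
  using rho_nonzero by (intro continuous_intros continuous_on_rho) auto

lemma integrable_integrand:
  "z \<in> S \<Longrightarrow> (\<lambda>w. g w ^ n / \<rho> w z ^ k) integrable_on {0..sqrt 2}"
  by (rule integrable_continuous_interval[OF continuous_on_integrand])

lemma Inu_eq_K:
  assumes "z \<in> S"
  shows "Inu u sa R \<nu> z = 2 * K \<nu> z / (of_real (sqrt 2) * sa)"
proof -
  have "((\<lambda>t. g (sqrt (t + 1)) ^ \<nu> / \<rho> (sqrt (t + 1)) z / of_real (sqrt (t + 1)))
      has_integral 2 * K \<nu> z) {-1..1}"
    unfolding K_def
    using has_integral_sqrt_substitution[of 1 "\<lambda>w. g w ^ \<nu> / \<rho> w z"]
      continuous_on_integrand[OF assms, of \<nu> 1]
    by simp
  then have "((\<lambda>t. (of_real t + u) ^ \<nu> / (of_real (sqrt (t + 1)) * R t z))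
      has_integral 2 * K \<nu> z) {-1..1}"
    by (rule has_integral_eq[rotated]) (simp add: g_def \<rho>_def)
  then show ?thesis
    unfolding Inu_def by (simp add: integral_unique)
qed

lemma E_add_two:
  assumes "z \<in> S"
  shows "E (\<nu> + 2) z = K \<nu> z - z * E \<nu> z"
proof -
  have "g w ^ (\<nu> + 2) / \<rho> w z ^ 3 = g w ^ \<nu> / \<rho> w z - z * (g w ^ \<nu> / \<rho> w z ^ 3)"
    if "w \<in> {0..sqrt 2}" for w
  proof -
    have "g w ^ \<nu> / \<rho> w z = g w ^ \<nu> * (g w ^ 2 + z) / \<rho> w z ^ 3"
      using rho_square[OF that assms] g_square_plus_nonzero[OF that assms]
      by (simp add: power3_eq_cube power2_eq_square)
    then show ?thesis
      by (simp add: algebra_simps power_add power2_eq_square diff_divide_distrib add_divide_distrib)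
  qed
  then have "E (\<nu> + 2) z = integral {0..sqrt 2} (\<lambda>w. g w ^ \<nu> / \<rho> w z - z * (g w ^ \<nu> / \<rho> w z ^ 3))"
    unfolding E_def by (rule integral_cong)
  also have "\<dots> = K \<nu> z - z * E \<nu> z"
    unfolding K_def E_def
    using integral_diff[OF integrable_integrand[OF assms, of \<nu> 1, simplified]
        integrable_on_mult_right[OF integrable_integrand[OF assms, of \<nu> 3]]]
    by (simp only: integral_mult_right)
  finally show ?thesis .
qed

lemma rho_local_branch:
  assumes "z0 \<in> S"
  obtains r where "0 < r" and "ball z0 r \<subseteq> S"
    and "\<And>w. w \<in> {0..sqrt 2} \<Longrightarrow> r \<le> norm (g w ^ 2 + z0)"
    and "\<And>w z. w \<in> {0..sqrt 2} \<Longrightarrow> z \<in> ball z0 r \<Longrightarrow>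
           \<rho> w z = \<rho> w z0 * csqrt (1 + (z - z0) / (g w ^ 2 + z0))"
proof -
  have "continuous_on {0..sqrt 2} (\<lambda>w. norm (g w ^ 2 + z0))"
    by (intro continuous_intros)
  from continuous_attains_inf[OF compact_Icc _ this] obtain w0 where w0: "w0 \<in> {0..sqrt 2}"
    and min: "\<forall>w \<in> {0..sqrt 2}. norm (g w0 ^ 2 + z0) \<le> norm (g w ^ 2 + z0)"
    by auto
  obtain r0 where "0 < r0" "ball z0 r0 \<subseteq> S"
    using open_S assms openE by blast
  define r where "r = min r0 (norm (g w0 ^ 2 + z0))"
  have r: "0 < r" "ball z0 r \<subseteq> S"
    using \<open>0 < r0\<close> \<open>ball z0 r0 \<subseteq> S\<close> g_square_plus_nonzero[OF w0 assms] unfolding r_def by auto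
  have r_le: "r \<le> norm (g w ^ 2 + z0)" if "w \<in> {0..sqrt 2}" for w
    using min that unfolding r_def by (meson min.coboundedI2)
  have "\<rho> w z = \<rho> w z0 * csqrt (1 + (z - z0) / (g w ^ 2 + z0))"
    if w: "w \<in> {0..sqrt 2}" and z: "z \<in> ball z0 r" for w z
  proof (rule csqrt_branch_on_ball[OF _ _ r_le[OF w] z])
    show "continuous_on (ball z0 r) (\<lambda>z. \<rho> w z)"
      unfolding \<rho>_def
      using holomorphic_on_imp_continuous_on[OF R_holomorphic[OF substituted_in_range[OF w]]] r(2)
      by (rule continuous_on_subset)
    show "\<rho> w y ^ 2 = (g w ^ 2 + z0) + (y - z0)" if "y \<in> ball z0 r" for y
      using rho_square[OF w] that r(2) by auto
  qed
  with r r_le show ?thesis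
    using that by blast
qed

text \<open>The hypotheses give continuity in \<open>w\<close> and in \<open>z\<close> only separately; the local formula of
  \<open>rho_local_branch\<close> makes it joint, as differentiation under the integral sign requires.\<close>

lemma continuous_on_rho_joint:
  assumes "z0 \<in> S"
  obtains r where "0 < r" and "ball z0 r \<subseteq> S"
    and "continuous_on (ball z0 r \<times> {0..sqrt 2}) (\<lambda>p. \<rho> (snd p) (fst p))"
proof -
  obtain r where r: "0 < r" "ball z0 r \<subseteq> S"
    and r_le: "\<And>w. w \<in> {0..sqrt 2} \<Longrightarrow> r \<le> norm (g w ^ 2 + z0)"
    and branch: "\<And>w z. w \<in> {0..sqrt 2} \<Longrightarrow> z \<in> ball z0 r \<Longrightarrow>
           \<rho> w z = \<rho> w z0 * csqrt (1 + (z - z0) / (g w ^ 2 + z0))"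
    using rho_local_branch[OF assms] by blast
  have notneg: "1 + (fst p - z0) / (g (snd p) ^ 2 + z0) \<notin> \<real>\<^sub>\<le>\<^sub>0"
    if "p \<in> ball z0 r \<times> {0..sqrt 2}" for p
    using that r_le[of "snd p"]
    by (intro one_plus_divide_notin_nonpos_Reals) (auto simp: dist_norm norm_minus_commute)
  have "continuous_on (ball z0 r \<times> {0..sqrt 2}) (\<lambda>p. \<rho> (snd p) z0)"
    by (rule continuous_on_compose2[OF continuous_on_rho[OF assms] continuous_on_snd]) auto
  moreover have "continuous_on (ball z0 r \<times> {0..sqrt 2}) (\<lambda>p. 1 + (fst p - z0) / (g (snd p) ^ 2 + z0))"
    using g_square_plus_nonzero assms by (intro continuous_intros) auto
  ultimately have "continuous_on (ball z0 r \<times> {0..sqrt 2})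
      (\<lambda>p. \<rho> (snd p) z0 * csqrt (1 + (fst p - z0) / (g (snd p) ^ 2 + z0)))"
    using notneg by (intro continuous_on_mult continuous_on_compose2[OF continuous_on_csqrt]) auto
  then have "continuous_on (ball z0 r \<times> {0..sqrt 2}) (\<lambda>p. \<rho> (snd p) (fst p))"
    by (rule continuous_on_eq) (auto simp: branch)
  with r that show ?thesis by blast
qed

lemma rho_has_field_derivative:
  assumes w: "w \<in> {0..sqrt 2}" and z: "z \<in> S"
  shows "((\<lambda>z. \<rho> w z) has_field_derivative 1 / (2 * \<rho> w z)) (at z)"
proof -
  have "continuous (at z) (\<lambda>z. \<rho> w z)"
    unfolding \<rho>_def using R_holomorphic[OF substituted_in_range[OF w]] open_S z
    by (intro field_differentiable_imp_continuous_at holomorphic_on_imp_differentiable_at)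
  moreover have "\<forall>\<^sub>F y in at z. \<rho> w y ^ 2 = g w ^ 2 + y"
    using eventually_at_in_open'[OF open_S z] by eventually_elim (rule rho_square[OF w])
  moreover have "((\<lambda>y. g w ^ 2 + y) has_field_derivative 1) (at z)"
    by (auto intro!: derivative_eq_intros)
  ultimately show ?thesis
    using has_field_derivative_sqrt rho_square[OF w z] rho_nonzero[OF w z] by blast
qed

lemma K_has_field_derivative:
  assumes "z0 \<in> S"
  shows "(K \<nu> has_field_derivative - E \<nu> z0 / 2) (at z0)"
proof -
  obtain r where r: "0 < r" "ball z0 r \<subseteq> S"
    and c_rho: "continuous_on (ball z0 r \<times> {0..sqrt 2}) (\<lambda>p. \<rho> (snd p) (fst p))"
    using continuous_on_rho_joint[OF assms] by blast
  have "((\<lambda>z. integral (cbox 0 (sqrt 2)) (\<lambda>w. g w ^ \<nu> / \<rho> w z)) has_field_derivative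
      integral (cbox 0 (sqrt 2)) (\<lambda>w. - (g w ^ \<nu> / \<rho> w z0 ^ 3) / 2)) (at z0 within ball z0 r)"
  proof (rule leibniz_rule_field_derivative)
    fix z w assume z: "z \<in> ball z0 r" and "w \<in> cbox 0 (sqrt 2)"
    then have w: "w \<in> {0..sqrt 2}" and "z \<in> S"
      using r by auto
    have "((\<lambda>z. g w ^ \<nu> / \<rho> w z) has_field_derivative - (g w ^ \<nu> / \<rho> w z ^ 3) / 2) (at z)"
      using DERIV_divide[OF DERIV_const rho_has_field_derivative[OF w \<open>z \<in> S\<close>]
          rho_nonzero[OF w \<open>z \<in> S\<close>]]
      by (rule DERIV_cong) (simp add: power3_eq_cube)
    then show "((\<lambda>z. g w ^ \<nu> / \<rho> w z) has_field_derivative - (g w ^ \<nu> / \<rho> w z ^ 3) / 2)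
        (at z within ball z0 r)"
      by (rule has_field_derivative_at_within)
  next
    show "(\<lambda>w. g w ^ \<nu> / \<rho> w z) integrable_on cbox 0 (sqrt 2)" if "z \<in> ball z0 r" for z
      using integrable_integrand[of z \<nu> 1] that r by auto
  next
    have c_g: "continuous_on (ball z0 r \<times> {0..sqrt 2}) (\<lambda>p. g (snd p))"
      by (intro continuous_intros)
    have nz: "\<forall>p \<in> ball z0 r \<times> {0..sqrt 2}. \<rho> (snd p) (fst p) ^ 3 \<noteq> 0"
      using rho_nonzero r(2) by auto
    have "continuous_on (ball z0 r \<times> {0..sqrt 2})
        (\<lambda>p. - (g (snd p) ^ \<nu> / \<rho> (snd p) (fst p) ^ 3) / 2)"
      by (intro continuous_on_divide continuous_on_minus continuous_on_power c_g c_rho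
          continuous_on_const nz) simp
    then show "continuous_on (ball z0 r \<times> cbox 0 (sqrt 2)) (\<lambda>(z, w). - (g w ^ \<nu> / \<rho> w z ^ 3) / 2)"
      by (simp only: case_prod_unfold cbox_interval)
  qed (use r in auto)
  then show ?thesis
    unfolding K_def E_def cbox_interval integral_divide integral_neg
      at_within_open[OF centre_in_ball[THEN iffD2, OF r(1)] open_ball] .
qed

lemma Inu_has_field_derivative:
  assumes "z \<in> S"
  shows "(Inu u sa R \<nu> has_field_derivative - E \<nu> z / (of_real (sqrt 2) * sa)) (at z)"
proof (rule has_field_derivative_transform_within_open[OF _ open_S assms])
  show "((\<lambda>z. 2 * K \<nu> z / (of_real (sqrt 2) * sa)) has_field_derivative
      - E \<nu> z / (of_real (sqrt 2) * sa)) (at z)"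
    using DERIV_cdivide[OF DERIV_cmult[OF K_has_field_derivative[OF assms]], of 2 \<nu> "of_real (sqrt 2) * sa"]
    by simp
qed (simp add: Inu_eq_K)

lemma g_has_vector_derivative: "(g has_vector_derivative 2 * of_real w) (at w)"
proof -
  have "((\<lambda>w. w\<^sup>2 - 1) has_real_derivative 2 * w) (at w)"
    by (auto intro!: derivative_eq_intros)
  from has_vector_derivative_add[OF has_vector_derivative_of_real[OF this] has_vector_derivative_const]
  show ?thesis
    unfolding g_def by simp
qed

lemma g_power_has_vector_derivative:
  "((\<lambda>w. g w ^ n) has_vector_derivative of_nat n * g w ^ (n - 1) * (2 * of_real w)) (at w)"
proof -
  have "((\<lambda>x. x ^ n) has_field_derivative of_nat n * g w ^ (n - 1)) (at (g w))"
    by (rule DERIV_cong[OF DERIV_power[OF DERIV_ident]]) simp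
  from field_vector_diff_chain_at[OF g_has_vector_derivative this] show ?thesis
    by (simp add: o_def ac_simps)
qed

lemma rho_has_vector_derivative:
  assumes w: "w \<in> {0<..<sqrt 2}" and z: "z \<in> S"
  shows "((\<lambda>w. \<rho> w z) has_vector_derivative 2 * of_real w * g w / \<rho> w z) (at w)"
proof -
  have w': "w \<in> {0..sqrt 2}"
    using w by simp
  have "continuous (at w) (\<lambda>w. \<rho> w z)"
    using continuous_on_interior[OF continuous_on_rho[OF z]] w by simp
  moreover have "\<forall>\<^sub>F y in at w. \<rho> y z ^ 2 = g y ^ 2 + z"
    using eventually_at_in_open'[OF open_greaterThanLessThan w]
    by eventually_elim (simp add: rho_square z)
  moreover note rho_square[OF w' z] rho_nonzero[OF w' z]
  moreover have "((\<lambda>w. g w ^ 2 + z) has_vector_derivative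
      of_nat 2 * g w ^ (2 - 1) * (2 * of_real w) + 0) (at w)"
    by (rule has_vector_derivative_add[OF g_power_has_vector_derivative has_vector_derivative_const])
  ultimately have "((\<lambda>w. \<rho> w z) has_vector_derivative
      (of_nat 2 * g w ^ (2 - 1) * (2 * of_real w) + 0) / (2 * \<rho> w z)) (at w)"
    by (rule has_vector_derivative_sqrt)
  then show ?thesis
    by (rule has_vector_derivative_eq_rhs) (simp add: rho_nonzero[OF w' z])
qed

text \<open>Integrate the derivative of \<open>w g(w)\<^sup>k / \<rho>(w, z)\<close>, using \<open>w\<^sup>2 = g(w) + 1 - u\<close>.\<close>

lemma K_E_integration_by_parts:
  assumes z: "z \<in> S"
  shows "(1 + 2 * of_nat k) * K k z + 2 * of_nat k * (1 - u) * K (k - 1) z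
           - 2 * (E (k + 2) z + (1 - u) * E (k + 1) z)
         = of_real (sqrt 2) * (1 + u) ^ k / R 1 z"
proof -
  define F where "F w = of_real w * g w ^ k * inverse (\<rho> w z)" for w
  define F' where "F' w = (1 + 2 * of_nat k) * (g w ^ k / \<rho> w z)
      + 2 * of_nat k * (1 - u) * (g w ^ (k - 1) / \<rho> w z)
      - 2 * (g w ^ (k + 2) / \<rho> w z ^ 3 + (1 - u) * (g w ^ (k + 1) / \<rho> w z ^ 3))" for w
  have "(F' has_integral F (sqrt 2) - F 0) {0..sqrt 2}"
  proof (rule fundamental_theorem_of_calculus_interior)
    show "continuous_on {0..sqrt 2} F"
      unfolding F_def using rho_nonzero z
      by (intro continuous_intros continuous_on_rho) auto
  next
    fix w assume w: "w \<in> {0<..<sqrt 2}"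
    then have nz: "\<rho> w z \<noteq> 0"
      using rho_nonzero z by simp
    have "((\<lambda>w. \<rho> w z) has_vector_derivative 2 * of_real w * g w / \<rho> w z) (at w)"
      by (rule rho_has_vector_derivative[OF w z])
    from field_vector_diff_chain_at[OF this DERIV_inverse[OF nz]]
    have "((\<lambda>w. inverse (\<rho> w z)) has_vector_derivative
        2 * of_real w * g w / \<rho> w z * - (inverse (\<rho> w z) ^ Suc (Suc 0))) (at w)"
      unfolding o_def .
    then have inv: "((\<lambda>w. inverse (\<rho> w z)) has_vector_derivative
        - (2 * of_real w * g w / \<rho> w z ^ 3)) (at w)"
      by (rule has_vector_derivative_eq_rhs) (simp add: nz field_simps power3_eq_cube)
    have x: "((\<lambda>w. of_real w :: complex) has_vector_derivative 1) (at w)"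
      using has_vector_derivative_of_real[OF DERIV_ident] by simp
    have "(F has_vector_derivative
        (of_real w * g w ^ k) * - (2 * of_real w * g w / \<rho> w z ^ 3)
        + (of_real w * (of_nat k * g w ^ (k - 1) * (2 * of_real w)) + 1 * g w ^ k) * inverse (\<rho> w z)) (at w)"
      unfolding F_def
      by (intro has_vector_derivative_mult x g_power_has_vector_derivative inv)
    moreover have "(of_real w * g w ^ k) * - (2 * of_real w * g w / \<rho> w z ^ 3)
        + (of_real w * (of_nat k * g w ^ (k - 1) * (2 * of_real w)) + 1 * g w ^ k) * inverse (\<rho> w z)
        = F' w"
    proof -
      have ww: "of_real w * of_real w = g w + (1 - u)"
        unfolding g_def by (simp add: power2_eq_square)
      have "(of_real w * g w ^ k) * - (2 * of_real w * g w / \<rho> w z ^ 3)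
          + (of_real w * (of_nat k * g w ^ (k - 1) * (2 * of_real w)) + 1 * g w ^ k) * inverse (\<rho> w z)
          = g w ^ k / \<rho> w z + 2 * of_nat k * (of_real w * of_real w) * g w ^ (k - 1) / \<rho> w z
            - 2 * (of_real w * of_real w) * g w ^ (k + 1) / \<rho> w z ^ 3"
        using nz by (simp add: field_simps power3_eq_cube)
      also have "\<dots> = F' w"
        unfolding F'_def ww
        by (simp add: algebra_simps add_divide_distrib diff_divide_distrib) (cases k; simp)
      finally show ?thesis .
    qed
    ultimately show "(F has_vector_derivative F' w) (at w)"
      by simp
  qed simp
  moreover have "(F' has_integral (1 + 2 * of_nat k) * K k z + 2 * of_nat k * (1 - u) * K (k - 1) z
           - 2 * (E (k + 2) z + (1 - u) * E (k + 1) z)) {0..sqrt 2}"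
    unfolding F'_def K_def E_def
    by (intro has_integral_diff has_integral_add has_integral_mult_right integrable_integral
        integrable_integrand[OF z, where k = 1, simplified] integrable_integrand[OF z, where k = 3])
  moreover have "F (sqrt 2) - F 0 = of_real (sqrt 2) * (1 + u) ^ k / R 1 z"
    unfolding F_def g_def \<rho>_def by (simp add: divide_inverse)
  ultimately show ?thesis
    using has_integral_unique by metis
qed

lemma E_two_eq:
  "z \<in> S \<Longrightarrow> E 2 z = (K 0 z - of_real (sqrt 2) / R 1 z) / 2 - (1 - u) * E 1 z"
  using K_E_integration_by_parts[of z 0, unfolded add_0] by (simp add: field_simps)

lemma E_three_eq:
  assumes "z \<in> S"
  shows "E 3 z = (3 * K 1 z + 2 * (1 - u) * K 0 z - of_real (sqrt 2) * (1 + u) / R 1 z) / 2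
    - (1 - u) * E 2 z"
proof -
  have "3 * K 1 z + 2 * (1 - u) * K 0 z - 2 * (E 3 z + (1 - u) * E 2 z)
      = of_real (sqrt 2) * (1 + u) / R 1 z"
    using K_E_integration_by_parts[OF assms, of 1] by (simp add: numeral_2_eq_2 numeral_3_eq_3)
  from this[symmetric] show ?thesis
    by (simp add: field_simps)
qed

lemma R_one_nonzero: "z \<in> S \<Longrightarrow> R 1 z \<noteq> 0"
  using rho_nonzero[of "sqrt 2" z] by (simp add: \<rho>_def)

lemma deriv_Inu:
  "z \<in> S \<Longrightarrow> deriv (Inu u sa R \<nu>) z = - E \<nu> z / (of_real (sqrt 2) * sa)"
  by (rule DERIV_imp_deriv[OF Inu_has_field_derivative])

lemma deriv_Inu_add_two:
  assumes "z \<in> S"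
  shows "deriv (Inu u sa R (\<nu> + 2)) z = - (1/2) * Inu u sa R \<nu> z - z * deriv (Inu u sa R \<nu>) z"
  using E_add_two[OF assms, of \<nu>]
  by (cases "sa = 0") (simp_all add: deriv_Inu[OF assms] Inu_eq_K[OF assms] field_simps)

lemma deriv_Inu_two_plus_one:
  assumes "z \<in> S"
  shows "deriv (\<lambda>z. Inu u sa R 2 z + Inu u sa R 1 z) z
    = u * deriv (Inu u sa R 1) z - (1/4) * Inu u sa R 0 z + 1 / (2 * sa * R 1 z)"
proof -
  have "deriv (\<lambda>z. Inu u sa R 2 z + Inu u sa R 1 z) z
      = - E 2 z / (of_real (sqrt 2) * sa) + - E 1 z / (of_real (sqrt 2) * sa)"
    by (rule DERIV_imp_deriv[OF DERIV_add[OF Inu_has_field_derivative[OF assms]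
          Inu_has_field_derivative[OF assms]]])
  then show ?thesis
    unfolding deriv_Inu[OF assms] Inu_eq_K[OF assms] E_two_eq[OF assms]
    using R_one_nonzero[OF assms] by (cases "sa = 0") (simp_all add: field_simps)
qed

lemma deriv_Inu_three_minus_one:
  assumes "z \<in> S"
  shows "deriv (\<lambda>z. Inu u sa R 3 z - Inu u sa R 1 z) z
    = (u\<^sup>2 - 2 * u) * deriv (Inu u sa R 1) z - (3/4) * Inu u sa R 1 z
      + (u - 1) / 4 * Inu u sa R 0 z + u / (sa * R 1 z)"
proof -
  have "deriv (\<lambda>z. Inu u sa R 3 z - Inu u sa R 1 z) z
      = - E 3 z / (of_real (sqrt 2) * sa) - - E 1 z / (of_real (sqrt 2) * sa)"
    by (rule DERIV_imp_deriv[OF DERIV_diff[OF Inu_has_field_derivative[OF assms]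
          Inu_has_field_derivative[OF assms]]])
  also have "\<dots> = (u\<^sup>2 - 2 * u) * deriv (Inu u sa R 1) z - (3/4) * Inu u sa R 1 z
      + (u - 1) / 4 * Inu u sa R 0 z + u / (sa * R 1 z)"
  proof (cases "sa = 0")
    case False
    then show ?thesis
      unfolding deriv_Inu[OF assms] Inu_eq_K[OF assms] E_three_eq[OF assms] E_two_eq[OF assms]
      using R_one_nonzero[OF assms] by (simp add: field_simps power2_eq_square)
  qed (simp add: deriv_Inu[OF assms] Inu_eq_K[OF assms])
  finally show ?thesis .
qed

end

theorem lemma3p3:
  fixes u a sa s :: complex and S :: "complex set" and R :: "real \<Rightarrow> complex \<Rightarrow> complex"
  assumes "a \<noteq> 0" and "sa ^ 2 = a"
    and "open S"
    and "\<forall>t\<in>{-1..1}. \<forall>z\<in>S. (complex_of_real t + u) ^ 2 + z \<noteq> 0"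
    and "\<forall>t\<in>{-1..1}. \<forall>z\<in>S. (R t z) ^ 2 = (complex_of_real t + u) ^ 2 + z"
    and "\<forall>z\<in>S. continuous_on {-1..1} (\<lambda>t. R t z)"
    and "\<forall>t\<in>{-1..1}. (\<lambda>z. R t z) holomorphic_on S"
    and "s \<in> S"
  shows "(\<forall>\<nu>. deriv (Inu u sa R (\<nu> + 2)) s
            = - (1/2) * Inu u sa R \<nu> s - s * deriv (Inu u sa R \<nu>) s)
      \<and> deriv (\<lambda>z. Inu u sa R 2 z + Inu u sa R 1 z) s
            = u * deriv (Inu u sa R 1) s - (1/4) * Inu u sa R 0 s + 1 / (2 * sa * R 1 s)
      \<and> deriv (\<lambda>z. Inu u sa R 3 z - Inu u sa R 1 z) s
            = (u^2 - 2*u) * deriv (Inu u sa R 1) s - (3/4) * Inu u sa R 1 s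
              + (u - 1) / 4 * Inu u sa R 0 s + u / (sa * R 1 s)"
proof -
  interpret sqrt_quadratic_family u S R
    using assms(3-7) by unfold_locales auto
  show ?thesis
    by (intro conjI allI deriv_Inu_add_two deriv_Inu_two_plus_one deriv_Inu_three_minus_one assms(8))
qed

end
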